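(* Let $R$ be an associative ring with unity and let $\mathbf{K}=(K,\leq_p)$ be an AEC with $K$ a class of left $R$-modules closed under direct sums, pure submodules and pure epimorphic images. If $M_1,M_2,N\in K$ with $M_1,M_2\leq_p N$, then there are $M_1',M_0\in K$ such that $M_0\leq_p M_1'\leq_p N$, $M_0\leq_p M_2$, $M_1\leq_p M_1'$, $\|M_0\|\leq\|M_1\|+|R|+\aleph_0$, and $M_1'\mathop{\perp}^{N}_{M_0}M_2$.
   Context: $\leq_p$ is the pure submodule relation; a pure epimorphism is a surjective homomorphism with pure kernel. An AEC $(K,\leq_p)$: closed under isomorphism and unions of $\leq_p$-chains, with a Löwenheim–Skolem number. For $M_0,M_1',M_2,N\in K$ with $M_0\leq_p M_1',M_2\leq_p N$, write $M_1'\mathop{\perp}^N_{M_0}M_2$ if the homomorphism $t:(M_1'\oplus M_2)/\{(m,-m):m\in M_0\}\to N$, $t([(a,b)])=a+b$ (the canonical map from the pushout in $R$-Mod of the inclusions $M_0\hookrightarrow M_1'$, $M_0\hookrightarrow M_2$ to $N$), is a pure embedding (injective with pure image). *)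

theory Defs
  imports "HOL-Algebra.Module" "HOL-Algebra.Ring"
begin

text \<open>HOL-Algebra's locale module requires a commutative ring, so we define left modules here,
  with exactly the axioms of HOL-Algebra's module but with ring R instead of cring R.\<close>

definition left_module :: "('r, 'm) ring_scheme \<Rightarrow> ('r, 'a) module \<Rightarrow> bool" where
  "left_module R M \<longleftrightarrow> ring R \<and> abelian_group M \<and>
     (\<forall>a\<in>carrier R. \<forall>x\<in>carrier M. a \<odot>\<^bsub>M\<^esub> x \<in> carrier M) \<and>
     (\<forall>a\<in>carrier R. \<forall>b\<in>carrier R. \<forall>x\<in>carrier M.
        (a \<oplus>\<^bsub>R\<^esub> b) \<odot>\<^bsub>M\<^esub> x = a \<odot>\<^bsub>M\<^esub> x \<oplus>\<^bsub>M\<^esub> b \<odot>\<^bsub>M\<^esub> x) \<and>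
     (\<forall>a\<in>carrier R. \<forall>x\<in>carrier M. \<forall>y\<in>carrier M.
        a \<odot>\<^bsub>M\<^esub> (x \<oplus>\<^bsub>M\<^esub> y) = a \<odot>\<^bsub>M\<^esub> x \<oplus>\<^bsub>M\<^esub> a \<odot>\<^bsub>M\<^esub> y) \<and>
     (\<forall>a\<in>carrier R. \<forall>b\<in>carrier R. \<forall>x\<in>carrier M.
        (a \<otimes>\<^bsub>R\<^esub> b) \<odot>\<^bsub>M\<^esub> x = a \<odot>\<^bsub>M\<^esub> (b \<odot>\<^bsub>M\<^esub> x)) \<and>
     (\<forall>x\<in>carrier M. \<one>\<^bsub>R\<^esub> \<odot>\<^bsub>M\<^esub> x = x)"

definition mod_hom :: "('r, 'm) ring_scheme \<Rightarrow> ('r, 'a) module \<Rightarrow> ('r, 'b) module \<Rightarrow> ('a \<Rightarrow> 'b) \<Rightarrow> bool" where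
  "mod_hom R M M' f \<longleftrightarrow> left_module R M \<and> left_module R M' \<and>
     (\<forall>x\<in>carrier M. f x \<in> carrier M') \<and>
     (\<forall>x\<in>carrier M. \<forall>y\<in>carrier M. f (x \<oplus>\<^bsub>M\<^esub> y) = f x \<oplus>\<^bsub>M'\<^esub> f y) \<and>
     (\<forall>a\<in>carrier R. \<forall>x\<in>carrier M. f (a \<odot>\<^bsub>M\<^esub> x) = a \<odot>\<^bsub>M'\<^esub> f x)"

definition mod_iso :: "('r, 'm) ring_scheme \<Rightarrow> ('r, 'a) module \<Rightarrow> ('r, 'b) module \<Rightarrow> bool" where
  "mod_iso R M M' \<longleftrightarrow> (\<exists>f. mod_hom R M M' f \<and> bij_betw f (carrier M) (carrier M'))"

definition submod :: "('r, 'm) ring_scheme \<Rightarrow> ('r, 'a) module \<Rightarrow> 'a set \<Rightarrow> bool" where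
  "submod R N S \<longleftrightarrow> S \<subseteq> carrier N \<and> \<zero>\<^bsub>N\<^esub> \<in> S \<and>
     (\<forall>x\<in>S. \<forall>y\<in>S. x \<oplus>\<^bsub>N\<^esub> y \<in> S) \<and> (\<forall>x\<in>S. \<ominus>\<^bsub>N\<^esub> x \<in> S) \<and>
     (\<forall>a\<in>carrier R. \<forall>x\<in>S. a \<odot>\<^bsub>N\<^esub> x \<in> S)"

definition pure_submod :: "('r, 'm) ring_scheme \<Rightarrow> ('r, 'a) module \<Rightarrow> 'a set \<Rightarrow> bool" where
  "pure_submod R N S \<longleftrightarrow> submod R N S \<and>
     (\<forall>(m::nat) (n::nat) (r::nat \<Rightarrow> nat \<Rightarrow> 'r) (c::nat \<Rightarrow> 'a).
        (\<forall>i<m. \<forall>j<n. r i j \<in> carrier R) \<longrightarrow> (\<forall>i<m. c i \<in> S) \<longrightarrow>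
        (\<exists>x. (\<forall>j<n. x j \<in> carrier N) \<and>
              (\<forall>i<m. finsum N (\<lambda>j. r i j \<odot>\<^bsub>N\<^esub> x j) {..<n} = c i)) \<longrightarrow>
        (\<exists>y. (\<forall>j<n. y j \<in> S) \<and>
              (\<forall>i<m. finsum N (\<lambda>j. r i j \<odot>\<^bsub>N\<^esub> y j) {..<n} = c i)))"

definition pure_le :: "('r, 'm) ring_scheme \<Rightarrow> ('r, 'a) module \<Rightarrow> ('r, 'a) module \<Rightarrow> bool" where
  "pure_le R M N \<longleftrightarrow> left_module R M \<and> left_module R N \<and>
     carrier M \<subseteq> carrier N \<and> \<zero>\<^bsub>M\<^esub> = \<zero>\<^bsub>N\<^esub> \<and>
     (\<forall>x\<in>carrier M. \<forall>y\<in>carrier M. x \<oplus>\<^bsub>M\<^esub> y = x \<oplus>\<^bsub>N\<^esub> y) \<and>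
     (\<forall>a\<in>carrier R. \<forall>x\<in>carrier M. a \<odot>\<^bsub>M\<^esub> x = a \<odot>\<^bsub>N\<^esub> x) \<and>
     pure_submod R N (carrier M)"

definition pure_epi :: "('r, 'm) ring_scheme \<Rightarrow> ('r, 'a) module \<Rightarrow> ('r, 'b) module \<Rightarrow> ('a \<Rightarrow> 'b) \<Rightarrow> bool" where
  "pure_epi R M M' f \<longleftrightarrow> mod_hom R M M' f \<and> f ` carrier M = carrier M' \<and>
     pure_submod R M {x\<in>carrier M. f x = \<zero>\<^bsub>M'\<^esub>}"

text \<open>Direct sums: D is (isomorphic to) the direct sum of the family (M i) over I,
  i.e. there is an R-linear bijection from the finitely supported families onto D.\<close>

definition dsum_carrier :: "'i set \<Rightarrow> ('i \<Rightarrow> ('r, 'a) module) \<Rightarrow> ('i \<Rightarrow> 'a) set" where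
  "dsum_carrier I M = {x \<in> PiE I (\<lambda>i. carrier (M i)). finite {i\<in>I. x i \<noteq> \<zero>\<^bsub>M i\<^esub>}}"

definition is_direct_sum :: "('r, 'm) ring_scheme \<Rightarrow> 'i set \<Rightarrow> ('i \<Rightarrow> ('r, 'a) module) \<Rightarrow> ('r, 'a) module \<Rightarrow> bool" where
  "is_direct_sum R I M D \<longleftrightarrow> (\<forall>i\<in>I. left_module R (M i)) \<and> left_module R D \<and>
     (\<exists>\<phi>. bij_betw \<phi> (dsum_carrier I M) (carrier D) \<and>
        (\<forall>x\<in>dsum_carrier I M. \<forall>y\<in>dsum_carrier I M.
           \<phi> (\<lambda>i\<in>I. x i \<oplus>\<^bsub>M i\<^esub> y i) = \<phi> x \<oplus>\<^bsub>D\<^esub> \<phi> y) \<and>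
        (\<forall>a\<in>carrier R. \<forall>x\<in>dsum_carrier I M.
           \<phi> (\<lambda>i\<in>I. a \<odot>\<^bsub>M i\<^esub> x i) = a \<odot>\<^bsub>D\<^esub> \<phi> x))"

definition AEC_pure :: "('r, 'm) ring_scheme \<Rightarrow> (('r, 'a) module \<Rightarrow> bool) \<Rightarrow> bool" where
  "AEC_pure R K \<longleftrightarrow>
     (\<forall>M. K M \<longrightarrow> left_module R M) \<and>
     \<comment> \<open>closed under isomorphism\<close>
     (\<forall>M M'. K M \<and> mod_iso R M M' \<longrightarrow> K M') \<and>
     \<comment> \<open>closed under unions of nonempty \<le>p-chains (Tarski-Vaught chain axioms)\<close>
     (\<forall>C U. C \<noteq> {} \<and> (\<forall>M\<in>C. K M) \<and> (\<forall>M\<in>C. \<forall>M'\<in>C. pure_le R M M' \<or> pure_le R M' M) \<and>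
            left_module R U \<and> carrier U = (\<Union>M\<in>C. carrier M) \<and> (\<forall>M\<in>C. pure_le R M U)
        \<longrightarrow> K U \<and> (\<forall>N. K N \<and> (\<forall>M\<in>C. pure_le R M N) \<longrightarrow> pure_le R U N)) \<and>
     \<comment> \<open>Loewenheim-Skolem number\<close>
     (\<exists>L::'a set. \<forall>N A. K N \<and> A \<subseteq> carrier N \<longrightarrow>
        (\<exists>M. K M \<and> pure_le R M N \<and> A \<subseteq> carrier M \<and>
             (card_of (carrier M), card_of (A <+> L <+> carrier R <+> (UNIV::nat set))) \<in> ordLeq))"

text \<open>Pushout of M0 \<hookrightarrow> M1', M0 \<hookrightarrow> M2 in R-Mod:
  (M1' \<oplus> M2) / {(m, -m) : m \<in> M0}, realised as equivalence classes of pairs.\<close>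

definition pushout_rel :: "('r, 'a) module \<Rightarrow> ('r, 'a) module \<Rightarrow> ('r, 'a) module \<Rightarrow> (('a \<times> 'a) \<times> ('a \<times> 'a)) set" where
  "pushout_rel M0 M1 M2 = {((a, b), (a', b')).
     a \<in> carrier M1 \<and> b \<in> carrier M2 \<and> a' \<in> carrier M1 \<and> b' \<in> carrier M2 \<and>
     (\<exists>m\<in>carrier M0. a \<ominus>\<^bsub>M1\<^esub> a' = m \<and> b \<ominus>\<^bsub>M2\<^esub> b' = \<ominus>\<^bsub>M2\<^esub> m)}"

definition pushout_carrier :: "('r, 'a) module \<Rightarrow> ('r, 'a) module \<Rightarrow> ('r, 'a) module \<Rightarrow> ('a \<times> 'a) set set" where
  "pushout_carrier M0 M1 M2 = (carrier M1 \<times> carrier M2) // pushout_rel M0 M1 M2"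

text \<open>The canonical map t([(a,b)]) = a + b into N.\<close>

definition pushout_map :: "('r, 'a) module \<Rightarrow> ('a \<times> 'a) set \<Rightarrow> 'a" where
  "pushout_map N X = the_elem ((\<lambda>(a, b). a \<oplus>\<^bsub>N\<^esub> b) ` X)"

text \<open>M1' \<perp>^N_{M0} M2: t is a pure embedding (injective with pure image).\<close>

definition indep :: "('r, 'm) ring_scheme \<Rightarrow> ('r, 'a) module \<Rightarrow> ('r, 'a) module \<Rightarrow> ('r, 'a) module \<Rightarrow> ('r, 'a) module \<Rightarrow> bool" where
  "indep R M0 M1 M2 N \<longleftrightarrow>
     inj_on (pushout_map N) (pushout_carrier M0 M1 M2) \<and>
     pure_submod R N (pushout_map N ` pushout_carrier M0 M1 M2)"

end

theory Submission
  imports Defs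
begin

text \<open>Close \<open>M\<^sub>1\<close> inside \<open>N\<close> under the module operations and under witnesses for three kinds
  of finite linear systems with parameters in the closure \<open>S\<close>: systems solvable in \<open>N\<close>, systems
  solvable in \<open>N\<close> modulo \<open>M\<^sub>2\<close>, and systems solvable in \<open>M\<^sub>2\<close>. There are only
  \<open>|M\<^sub>1| + |R| + \<aleph>\<^sub>0\<close> such systems, so \<open>S\<close> stays that small. Put \<open>M\<^sub>1' = S\<close> and
  \<open>M\<^sub>0 = S \<inter> M\<^sub>2\<close>. The first kind makes \<open>S\<close> pure in \<open>N\<close>; the third makes \<open>M\<^sub>0\<close> pure in
  \<open>M\<^sub>2\<close>, and, with purity of \<open>M\<^sub>2\<close> in \<open>N\<close>, pure in \<open>S\<close>. Since \<open>M\<^sub>0\<close> is the intersection,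
  the pushout map is injective with image \<open>S + M\<^sub>2\<close>, and \<open>S + M\<^sub>2\<close> is pure in \<open>N\<close>: a solution
  of a system with right-hand sides \<open>a + b\<close> (\<open>a \<in> S\<close>, \<open>b \<in> M\<^sub>2\<close>) is corrected by a witness in
  \<open>S\<close> for the same system modulo \<open>M\<^sub>2\<close> with right-hand sides \<open>a\<close>, and the remaining system has
  right-hand sides in \<open>M\<^sub>2\<close>, hence a solution in \<open>M\<^sub>2\<close>.\<close>

unbundle cardinal_syntax

subsection \<open>Cardinal bounds\<close>

lemma finite_card_of_ordLeq_infinite: "finite A \<Longrightarrow> infinite B \<Longrightarrow> |A| \<le>o |B|"
  by (rule ordLess_imp_ordLeq, rule finite_ordLess_infinite[OF card_of_Well_order card_of_Well_order])
     (auto simp: Field_card_of)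

lemma card_of_lists_length_ordLeq_infinite:
  assumes B: "infinite B" and A: "|A| \<le>o |B|"
  shows "|{xs\<in>lists A. length xs = k}| \<le>o |B|"
proof (induction k)
  case 0
  have "{xs\<in>lists A. length xs = 0} = {[]}" by auto
  then show ?case using finite_card_of_ordLeq_infinite[OF _ B, of "{[]}"] by simp
next
  case (Suc k)
  have "{xs\<in>lists A. length xs = Suc k} = (\<lambda>(a, xs). a # xs) ` (A \<times> {xs\<in>lists A. length xs = k})"
    by (auto simp: length_Suc_conv image_iff)
  moreover have "|A \<times> {xs\<in>lists A. length xs = k}| \<le>o |B|"
    by (rule card_of_Sigma_ordLeq_infinite[OF B A]) (use Suc in blast)
  ultimately show ?case using card_of_image ordLeq_transitive by simp blast
qed

lemma card_of_lists_ordLeq_infinite: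
  assumes B: "infinite B" and A: "|A| \<le>o |B|"
  shows "|lists A| \<le>o |B|"
proof -
  have "lists A = (\<Union>k. {xs\<in>lists A. length xs = k})" by auto
  moreover have "|\<Union>k. {xs\<in>lists A. length xs = k}| \<le>o |B|"
    by (rule card_of_UNION_ordLeq_infinite[OF B])
       (use B card_of_lists_length_ordLeq_infinite[OF B A] in \<open>auto simp: infinite_iff_card_of_nat\<close>)
  ultimately show ?thesis by simp
qed

definition submodule_of :: "('r, 'm) ring_scheme \<Rightarrow> ('r, 'a) module \<Rightarrow> ('r, 'a) module \<Rightarrow> bool" where
  "submodule_of R M N \<longleftrightarrow> left_module R M \<and> left_module R N \<and>
     carrier M \<subseteq> carrier N \<and> \<zero>\<^bsub>M\<^esub> = \<zero>\<^bsub>N\<^esub> \<and>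
     (\<forall>x\<in>carrier M. \<forall>y\<in>carrier M. x \<oplus>\<^bsub>M\<^esub> y = x \<oplus>\<^bsub>N\<^esub> y) \<and>
     (\<forall>a\<in>carrier R. \<forall>x\<in>carrier M. a \<odot>\<^bsub>M\<^esub> x = a \<odot>\<^bsub>N\<^esub> x)"

lemma pure_le_iff_submodule_of: "pure_le R M N \<longleftrightarrow> submodule_of R M N \<and> pure_submod R N (carrier M)"
  unfolding pure_le_def submodule_of_def by blast

lemma submodule_of_add:
  "submodule_of R M N \<Longrightarrow> x \<in> carrier M \<Longrightarrow> y \<in> carrier M \<Longrightarrow> x \<oplus>\<^bsub>M\<^esub> y = x \<oplus>\<^bsub>N\<^esub> y"
  unfolding submodule_of_def by blast

lemma submodule_of_smult:
  "submodule_of R M N \<Longrightarrow> a \<in> carrier R \<Longrightarrow> x \<in> carrier M \<Longrightarrow> a \<odot>\<^bsub>M\<^esub> x = a \<odot>\<^bsub>N\<^esub> x"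
  unfolding submodule_of_def by blast

lemma submodule_of_subset:
  "submodule_of R A N \<Longrightarrow> submodule_of R C N \<Longrightarrow> carrier A \<subseteq> carrier C \<Longrightarrow> submodule_of R A C"
  unfolding submodule_of_def by (auto simp: subset_eq)

lemma left_module_smult_closed:
  "left_module R M \<Longrightarrow> a \<in> carrier R \<Longrightarrow> x \<in> carrier M \<Longrightarrow> a \<odot>\<^bsub>M\<^esub> x \<in> carrier M"
  by (simp add: left_module_def)

lemma submodule_of_abelian_group: "submodule_of R M N \<Longrightarrow> abelian_group M"
  unfolding submodule_of_def left_module_def by blast

lemma submodule_of_a_inv:
  assumes MN: "submodule_of R M N" and x: "x \<in> carrier M"
  shows "\<ominus>\<^bsub>M\<^esub> x = \<ominus>\<^bsub>N\<^esub> x"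
proof -
  interpret M: abelian_group M by (rule submodule_of_abelian_group[OF MN])
  interpret N: abelian_group N using MN unfolding submodule_of_def left_module_def by blast
  have "\<ominus>\<^bsub>M\<^esub> x \<oplus>\<^bsub>N\<^esub> x = \<zero>\<^bsub>N\<^esub>"
    using MN x M.l_neg[OF x] unfolding submodule_of_def by auto
  moreover have "\<ominus>\<^bsub>M\<^esub> x \<in> carrier N" "x \<in> carrier N"
    using MN x M.a_inv_closed[OF x] unfolding submodule_of_def by auto
  ultimately show ?thesis by (simp add: N.minus_equality)
qed

lemma submodule_of_minus:
  assumes "submodule_of R M N" "x \<in> carrier M" "y \<in> carrier M"
  shows "x \<ominus>\<^bsub>M\<^esub> y = x \<ominus>\<^bsub>N\<^esub> y"
proof -
  interpret M: abelian_group M by (rule submodule_of_abelian_group[OF assms(1)])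
  show ?thesis
    using assms submodule_of_a_inv[OF assms(1,3)] M.a_inv_closed[OF assms(3)]
    unfolding a_minus_def submodule_of_def by simp
qed

lemma submodule_of_finsum:
  fixes n :: nat
  assumes MN: "submodule_of R M N" and f: "\<forall>j<n. f j \<in> carrier M"
  shows "finsum M f {..<n} = finsum N f {..<n}"
proof -
  interpret M: abelian_group M by (rule submodule_of_abelian_group[OF MN])
  interpret N: abelian_group N using MN unfolding submodule_of_def left_module_def by blast
  show ?thesis
    using f
  proof (induction n)
    case 0
    then show ?case using MN unfolding submodule_of_def by simp
  next
    case (Suc n)
    have fM: "f \<in> {..<n} \<rightarrow> carrier M" "f n \<in> carrier M" using Suc.prems by auto
    then have fN: "f \<in> {..<n} \<rightarrow> carrier N" "f n \<in> carrier N"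
      using MN unfolding submodule_of_def by auto
    have "finsum M f {..<Suc n} = f n \<oplus>\<^bsub>M\<^esub> finsum M f {..<n}"
      unfolding lessThan_Suc using fM by (simp add: M.finsum_insert)
    also have "\<dots> = f n \<oplus>\<^bsub>N\<^esub> finsum N f {..<n}"
      using Suc MN fM M.finsum_closed[OF fM(1)] unfolding submodule_of_def by simp
    also have "\<dots> = finsum N f {..<Suc n}"
      unfolding lessThan_Suc using fN by (simp add: N.finsum_insert)
    finally show ?case .
  qed
qed

lemma submodule_of_submod:
  assumes MN: "submodule_of R M N"
  shows "submod R N (carrier M)"
proof -
  interpret M: abelian_group M by (rule submodule_of_abelian_group[OF MN])
  have add: "x \<oplus>\<^bsub>N\<^esub> y \<in> carrier M" if "x \<in> carrier M" "y \<in> carrier M" for x y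
    using M.a_closed[OF that] submodule_of_add[OF MN that] by simp
  have inv: "\<ominus>\<^bsub>N\<^esub> x \<in> carrier M" if "x \<in> carrier M" for x
    using M.a_inv_closed[OF that] submodule_of_a_inv[OF MN that] by simp
  have "left_module R M" using MN unfolding submodule_of_def by (rule conjunct1)
  then have smult: "a \<odot>\<^bsub>N\<^esub> x \<in> carrier M" if "a \<in> carrier R" "x \<in> carrier M" for a x
    using left_module_smult_closed[OF _ that] submodule_of_smult[OF MN that] by simp
  have "carrier M \<subseteq> carrier N" "\<zero>\<^bsub>N\<^esub> \<in> carrier M"
    using MN M.zero_closed by (simp_all add: submodule_of_def)
  then show ?thesis by (simp add: submod_def add inv smult)
qed

lemma (in abelian_group) inv_minus: "x \<in> carrier G \<Longrightarrow> y \<in> carrier G \<Longrightarrow> \<ominus> (x \<ominus> y) = y \<ominus> x"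
  by (simp add: a_minus_def minus_add a_comm)

lemma (in abelian_group) add_minus_cancel_left: "x \<in> carrier G \<Longrightarrow> y \<in> carrier G \<Longrightarrow> (x \<oplus> y) \<ominus> x = y"
  by (metis a_minus_def a_comm r_neg1 a_inv_closed a_assoc)

lemma (in abelian_group) add_minus_cancel: "x \<in> carrier G \<Longrightarrow> y \<in> carrier G \<Longrightarrow> x \<oplus> (y \<ominus> x) = y"
  by (metis a_minus_def a_comm r_neg2 a_inv_closed)

lemma (in abelian_group) add_eq_add_iff:
  assumes "a \<in> carrier G" "b \<in> carrier G" "a' \<in> carrier G" "b' \<in> carrier G"
  shows "a \<oplus> b = a' \<oplus> b' \<longleftrightarrow> b \<ominus> b' = \<ominus> (a \<ominus> a')"
  using assms
  by (smt (verit) a_minus_def a_comm r_neg2 a_inv_closed a_assoc a_closed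
      add.inv_solve_right add.inv_solve_left minus_add minus_minus)

subsection \<open>Linear systems in a left module\<close>

locale left_mod =
  fixes R :: "('r, 'm) ring_scheme" and N :: "('r, 'a) module" (structure)
  assumes left_module: "left_module R N"
begin

sublocale abelian_group N
  using left_module unfolding left_module_def by blast

lemma smult_closed [simp]: "a \<in> carrier R \<Longrightarrow> x \<in> carrier N \<Longrightarrow> a \<odot> x \<in> carrier N"
  using left_module unfolding left_module_def by blast

lemma smult_r_distr:
  "a \<in> carrier R \<Longrightarrow> x \<in> carrier N \<Longrightarrow> y \<in> carrier N \<Longrightarrow> a \<odot> (x \<oplus> y) = a \<odot> x \<oplus> a \<odot> y"
  using left_module unfolding left_module_def by blast

lemma smult_zero [simp]: "a \<in> carrier R \<Longrightarrow> a \<odot> \<zero> = \<zero>"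
  using smult_r_distr[of a \<zero> \<zero>] add.l_cancel_one'[of "a \<odot> \<zero>" "a \<odot> \<zero>"] by simp

definition lincomb :: "(nat \<Rightarrow> 'r) \<Rightarrow> (nat \<Rightarrow> 'a) \<Rightarrow> nat \<Rightarrow> 'a" where
  "lincomb r x n = finsum N (\<lambda>j. r j \<odot> x j) {..<n}"

lemma lincomb_closed [simp]:
  "\<forall>j<n. r j \<in> carrier R \<Longrightarrow> \<forall>j<n. x j \<in> carrier N \<Longrightarrow> lincomb r x n \<in> carrier N"
  unfolding lincomb_def by (rule finsum_closed) auto

lemma lincomb_add:
  assumes "\<forall>j<n. r j \<in> carrier R" "\<forall>j<n. x j \<in> carrier N" "\<forall>j<n. y j \<in> carrier N"
  shows "lincomb r (\<lambda>j. x j \<oplus> y j) n = lincomb r x n \<oplus> lincomb r y n"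
proof -
  have "lincomb r (\<lambda>j. x j \<oplus> y j) n = finsum N (\<lambda>j. r j \<odot> x j \<oplus> r j \<odot> y j) {..<n}"
    unfolding lincomb_def using assms by (intro finsum_cong') (auto simp: smult_r_distr)
  also have "\<dots> = lincomb r x n \<oplus> lincomb r y n"
    unfolding lincomb_def using assms by (intro finsum_addf) auto
  finally show ?thesis .
qed

lemma lincomb_minus:
  assumes r: "\<forall>j<n. r j \<in> carrier R" and x: "\<forall>j<n. x j \<in> carrier N" and y: "\<forall>j<n. y j \<in> carrier N"
  shows "lincomb r (\<lambda>j. x j \<ominus> y j) n = lincomb r x n \<ominus> lincomb r y n"
proof -
  have "lincomb r (\<lambda>j. \<ominus> y j) n \<oplus> lincomb r y n = lincomb r (\<lambda>j. \<ominus> y j \<oplus> y j) n"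
    using lincomb_add[of n r "\<lambda>j. \<ominus> y j" y] r y by simp
  also have "\<dots> = finsum N (\<lambda>j. \<zero>) {..<n}"
    unfolding lincomb_def using r y by (intro finsum_cong') (auto simp: l_neg)
  also have "\<dots> = \<zero>" by simp
  finally have "lincomb r (\<lambda>j. \<ominus> y j) n = \<ominus> lincomb r y n"
    using r y by (simp add: minus_equality)
  then show ?thesis
    unfolding a_minus_def using lincomb_add[of n r x "\<lambda>j. \<ominus> y j"] r x y by simp
qed

lemma lincomb_cong:
  "\<forall>j<n. r j = r' j \<Longrightarrow> \<forall>j<n. r j \<in> carrier R \<Longrightarrow> \<forall>j<n. x j \<in> carrier N \<Longrightarrow>
   lincomb r x n = lincomb r' x n"
  unfolding lincomb_def by (rule finsum_cong') auto

text \<open>\<open>rel\<close> is equality for ordinary systems and congruence modulo a submodule for systems modulo it.\<close>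

definition solution ::
  "'a set \<Rightarrow> ('a \<Rightarrow> 'a \<Rightarrow> bool) \<Rightarrow> nat \<Rightarrow> nat \<Rightarrow> (nat \<Rightarrow> nat \<Rightarrow> 'r) \<Rightarrow> (nat \<Rightarrow> 'a) \<Rightarrow> (nat \<Rightarrow> 'a) \<Rightarrow> bool"
  where "solution P rel m n r c x \<longleftrightarrow> (\<forall>j<n. x j \<in> P) \<and> (\<forall>i<m. rel (lincomb (r i) x n) (c i))"

lemma solution_cong:
  assumes "P \<subseteq> carrier N" "\<forall>i<m. \<forall>j<n. r i j \<in> carrier R"
    and "\<forall>i<m. \<forall>j<n. r' i j = r i j" "\<forall>i<m. c' i = c i"
  shows "solution P rel m n r' c' x \<longleftrightarrow> solution P rel m n r c x"
proof -
  have "lincomb (r' i) x n = lincomb (r i) x n" if "i < m" "\<forall>j<n. x j \<in> P" for i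
    using assms that by (intro lincomb_cong) auto
  then show ?thesis using assms(4) unfolding solution_def by auto
qed

lemma solution_mono: "solution P rel m n r c x \<Longrightarrow> P \<subseteq> Q \<Longrightarrow> solution Q rel m n r c x"
  unfolding solution_def by blast

lemma pure_submodI:
  assumes "submod R N S"
    and "\<And>m n r c x. \<forall>i<m. \<forall>j<n. r i j \<in> carrier R \<Longrightarrow> \<forall>i<m. c i \<in> S \<Longrightarrow>
           solution (carrier N) (=) m n r c x \<Longrightarrow> \<exists>y. solution S (=) m n r c y"
  shows "pure_submod R N S"
  using assms unfolding pure_submod_def solution_def lincomb_def by blast

lemma pure_submodD:
  assumes "pure_submod R N S" "\<forall>i<m. \<forall>j<n. r i j \<in> carrier R" "\<forall>i<m. c i \<in> S"
    and "solution (carrier N) (=) m n r c x"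
  shows "\<exists>y. solution S (=) m n r c y"
  using assms unfolding pure_submod_def solution_def lincomb_def by blast

lemma submodule_of_solution:
  assumes "submodule_of R M N" "P \<subseteq> carrier M" "\<forall>i<m. \<forall>j<n. r i j \<in> carrier R"
  shows "left_mod.solution M P rel m n r c x \<longleftrightarrow> solution P rel m n r c x"
proof -
  interpret M: left_mod R M using assms(1) unfolding submodule_of_def by (simp add: left_mod.intro)
  have "M.lincomb (r i) x n = lincomb (r i) x n" if i: "i < m" and x: "\<forall>j<n. x j \<in> P" for i
  proof -
    have xM: "\<forall>j<n. x j \<in> carrier M" using x assms(2) by blast
    have "M.lincomb (r i) x n = finsum N (\<lambda>j. r i j \<odot>\<^bsub>M\<^esub> x j) {..<n}"
      unfolding M.lincomb_def using xM assms(3) i by (intro submodule_of_finsum[OF assms(1)]) simp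
    also have "\<dots> = lincomb (r i) x n"
      unfolding lincomb_def using xM assms(1,3) i
      by (intro finsum_cong') (auto simp: submodule_of_def subset_eq)
    finally show ?thesis .
  qed
  then show ?thesis unfolding solution_def M.solution_def by auto
qed

lemma submodule_of_restrict:
  assumes T: "submod R N T"
  shows "submodule_of R (N\<lparr>carrier := T\<rparr>) N"
proof -
  have T': "T \<subseteq> carrier N" "\<zero> \<in> T" "\<And>x y. x \<in> T \<Longrightarrow> y \<in> T \<Longrightarrow> x \<oplus> y \<in> T"
    "\<And>x. x \<in> T \<Longrightarrow> \<ominus> x \<in> T" "\<And>a x. a \<in> carrier R \<Longrightarrow> x \<in> T \<Longrightarrow> a \<odot> x \<in> T"
    using T unfolding submod_def by blast+
  have "abelian_group (N\<lparr>carrier := T\<rparr>)"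
  proof (rule abelian_groupI)
    fix x assume "x \<in> carrier (N\<lparr>carrier := T\<rparr>)"
    then have "\<ominus> x \<in> T" "\<ominus> x \<oplus> x = \<zero>" using T'(1,4) l_neg by auto
    then show "\<exists>y\<in>carrier (N\<lparr>carrier := T\<rparr>). y \<oplus>\<^bsub>N\<lparr>carrier := T\<rparr>\<^esub> x = \<zero>\<^bsub>N\<lparr>carrier := T\<rparr>\<^esub>"
      by auto
  qed (use T' in \<open>auto simp: a_ac subset_eq\<close>)
  then have "left_module R (N\<lparr>carrier := T\<rparr>)"
    using left_module T' unfolding left_module_def by (auto simp: subset_eq)
  then show ?thesis using left_module T' unfolding submodule_of_def by auto
qed

lemma pure_leI:
  assumes AN: "submodule_of R A N" and CN: "submodule_of R C N" and AC: "carrier A \<subseteq> carrier C"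
    and sol: "\<And>m n r c x. \<forall>i<m. \<forall>j<n. r i j \<in> carrier R \<Longrightarrow> \<forall>i<m. c i \<in> carrier A \<Longrightarrow>
       solution (carrier C) (=) m n r c x \<Longrightarrow> \<exists>y. solution (carrier A) (=) m n r c y"
  shows "pure_le R A C"
proof -
  have AC': "submodule_of R A C" by (rule submodule_of_subset[OF AN CN AC])
  interpret C: left_mod R C using CN unfolding submodule_of_def by (simp add: left_mod.intro)
  have "pure_submod R C (carrier A)"
  proof (rule C.pure_submodI[OF submodule_of_submod[OF AC']])
    fix m n r c x
    assume r: "\<forall>i<m. \<forall>j<n. r i j \<in> carrier R" and c: "\<forall>i<m. c i \<in> carrier A"
      and "C.solution (carrier C) (=) m n r c x"
    then have "solution (carrier C) (=) m n r c x"
      using submodule_of_solution[OF CN order_refl r] by simp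
    then obtain y where "solution (carrier A) (=) m n r c y" using sol r c by blast
    then show "\<exists>y. C.solution (carrier A) (=) m n r c y"
      using submodule_of_solution[OF CN AC r] by blast
  qed
  then show ?thesis using AC' by (simp add: pure_le_iff_submodule_of)
qed

lemma submod_Int: "submod R N A \<Longrightarrow> submod R N B \<Longrightarrow> submod R N (A \<inter> B)"
  by (auto simp: submod_def)

definition sum_set :: "'a set \<Rightarrow> 'a set \<Rightarrow> 'a set" where
  "sum_set A B = {a \<oplus> b | a b. a \<in> A \<and> b \<in> B}"

lemma submod_sum_set:
  assumes A: "submod R N A" and B: "submod R N B"
  shows "submod R N (sum_set A B)"
  unfolding submod_def
proof (intro conjI ballI)
  have AN: "A \<subseteq> carrier N" and BN: "B \<subseteq> carrier N" using A B unfolding submod_def by auto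
  then show "sum_set A B \<subseteq> carrier N" unfolding sum_set_def by auto
  have "\<zero> = \<zero> \<oplus> \<zero>" by simp
  then show "\<zero> \<in> sum_set A B" using A B unfolding submod_def sum_set_def by blast
  fix x assume "x \<in> sum_set A B"
  then obtain a b where ab: "a \<in> A" "b \<in> B" "x = a \<oplus> b" unfolding sum_set_def by blast
  have aN: "a \<in> carrier N" and bN: "b \<in> carrier N" using ab AN BN by auto
  have "\<ominus> x = \<ominus> a \<oplus> \<ominus> b" using ab(3) aN bN by (simp add: minus_add a_comm)
  then show "\<ominus> x \<in> sum_set A B" using A B ab unfolding submod_def sum_set_def by blast
  show "r \<odot> x \<in> sum_set A B" if r: "r \<in> carrier R" for r
  proof -
    have "r \<odot> x = r \<odot> a \<oplus> r \<odot> b" using ab(3) r aN bN by (simp add: smult_r_distr)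
    then show ?thesis using A B ab r unfolding submod_def sum_set_def by blast
  qed
  show "x \<oplus> y \<in> sum_set A B" if y: "y \<in> sum_set A B" for y
  proof -
    obtain a' b' where ab': "a' \<in> A" "b' \<in> B" "y = a' \<oplus> b'" using y unfolding sum_set_def by blast
    have "x \<oplus> y = (a \<oplus> a') \<oplus> (b \<oplus> b')" using ab ab' AN BN by (auto simp: a_ac subset_eq)
    then show ?thesis using A B ab ab' unfolding submod_def sum_set_def by blast
  qed
qed

lemma sum_set_decompose:
  assumes "\<forall>i<m. c i \<in> sum_set A B"
  obtains a b where "\<forall>i<m. a i \<in> A \<and> b i \<in> B \<and> c i = a i \<oplus> b i"
proof -
  have "\<forall>i. \<exists>p. i < m \<longrightarrow> fst p \<in> A \<and> snd p \<in> B \<and> c i = fst p \<oplus> snd p"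
    using assms unfolding sum_set_def by force
  then obtain p where "\<forall>i<m. fst (p i) \<in> A \<and> snd (p i) \<in> B \<and> c i = fst (p i) \<oplus> snd (p i)"
    by (metis choice)
  then show ?thesis by (intro that[of "\<lambda>i. fst (p i)" "\<lambda>i. snd (p i)"]) blast
qed

lemma lincomb_correction_mem:
  assumes B: "submod R N B" and r: "\<forall>i<m. \<forall>j<n. r i j \<in> carrier R"
    and ab: "\<forall>i<m. a i \<in> carrier N \<and> b i \<in> B"
    and x: "solution (carrier N) (=) m n r (\<lambda>i. a i \<oplus> b i) x"
    and x': "solution (carrier N) (\<lambda>u v. u \<ominus> v \<in> B) m n r a x'"
    and i: "i < m"
  shows "lincomb (r i) (\<lambda>j. x j \<ominus> x' j) n \<in> B"
proof -
  have xN: "\<forall>j<n. x j \<in> carrier N" and x'N: "\<forall>j<n. x' j \<in> carrier N"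
    using x x' unfolding solution_def by auto
  have bN: "b i \<in> carrier N" using B ab i by (auto simp: submod_def)
  have "lincomb (r i) (\<lambda>j. x j \<ominus> x' j) n = (a i \<oplus> b i) \<ominus> lincomb (r i) x' n"
    using lincomb_minus r xN x'N x i unfolding solution_def by simp
  also have "\<dots> = b i \<ominus> (lincomb (r i) x' n \<ominus> a i)"
    using ab bN i lincomb_closed[of n "r i" x'] r x'N
    by (simp add: a_minus_def a_ac minus_add r_neg1 r_neg2 minus_minus)
  finally show ?thesis
    using B ab x' i unfolding solution_def submod_def a_minus_def by simp
qed

lemma solution_add_difference:
  assumes r: "\<forall>i<m. \<forall>j<n. r i j \<in> carrier R" and x: "solution (carrier N) (=) m n r c x"
    and x': "\<forall>j<n. x' j \<in> carrier N"
    and y: "solution (carrier N) (=) m n r (\<lambda>i. lincomb (r i) (\<lambda>j. x j \<ominus> x' j) n) y"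
  shows "solution (carrier N) (=) m n r c (\<lambda>j. x' j \<oplus> y j)"
  unfolding solution_def
proof (intro conjI allI impI)
  have xN: "\<forall>j<n. x j \<in> carrier N" and yN: "\<forall>j<n. y j \<in> carrier N"
    using x y unfolding solution_def by simp_all
  then show "x' j \<oplus> y j \<in> carrier N" if "j < n" for j using x' that by simp
  fix i assume i: "i < m"
  have ri: "\<forall>j<n. r i j \<in> carrier R" using r i by blast
  have "lincomb (r i) (\<lambda>j. x' j \<oplus> y j) n = lincomb (r i) x' n \<oplus> lincomb (r i) y n"
    using lincomb_add[OF ri x' yN] .
  also have "\<dots> = lincomb (r i) x' n \<oplus> lincomb (r i) (\<lambda>j. x j \<ominus> x' j) n"
    using y i unfolding solution_def by simp
  also have "\<dots> = lincomb (r i) x n"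
    using lincomb_minus[OF ri xN x'] lincomb_closed[OF ri xN] lincomb_closed[OF ri x']
    by (simp add: add_minus_cancel)
  finally show "lincomb (r i) (\<lambda>j. x' j \<oplus> y j) n = c i" using x i unfolding solution_def by simp
qed

lemma pure_submod_sum_set:
  assumes A: "submod R N A" and B: "pure_submod R N B"
    and A_mod_B: "\<And>m n r c x. \<forall>i<m. \<forall>j<n. r i j \<in> carrier R \<Longrightarrow> \<forall>i<m. c i \<in> A \<Longrightarrow>
       solution (carrier N) (\<lambda>u v. u \<ominus> v \<in> B) m n r c x \<Longrightarrow>
       \<exists>y. solution A (\<lambda>u v. u \<ominus> v \<in> B) m n r c y"
  shows "pure_submod R N (sum_set A B)"
proof (rule pure_submodI)
  have B': "submod R N B" using B by (simp add: pure_submod_def)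
  show "submod R N (sum_set A B)" by (rule submod_sum_set[OF A B'])
  have AN: "A \<subseteq> carrier N" and BN: "B \<subseteq> carrier N" using A B' by (simp_all add: submod_def)
  fix m n r c x
  assume r: "\<forall>i<m. \<forall>j<n. r i j \<in> carrier R" and c: "\<forall>i<m. c i \<in> sum_set A B"
    and x: "solution (carrier N) (=) m n r c x"
  obtain a b where ab: "\<forall>i<m. a i \<in> A \<and> b i \<in> B \<and> c i = a i \<oplus> b i"
    using sum_set_decompose[OF c] .
  have abN: "\<forall>i<m. a i \<in> carrier N \<and> b i \<in> B" and bN: "\<forall>i<m. b i \<in> carrier N"
    using ab AN BN by auto
  have x_ab: "solution (carrier N) (=) m n r (\<lambda>i. a i \<oplus> b i) x" using x ab unfolding solution_def by auto
  then have "solution (carrier N) (\<lambda>u v. u \<ominus> v \<in> B) m n r a x"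
    using abN bN unfolding solution_def by (simp add: add_minus_cancel_left)
  then obtain x' where x': "solution A (\<lambda>u v. u \<ominus> v \<in> B) m n r a x'"
    using A_mod_B r ab by blast
  have x'N: "solution (carrier N) (\<lambda>u v. u \<ominus> v \<in> B) m n r a x'" using solution_mono[OF x' AN] .
  have x'_carrier: "\<forall>j<n. x' j \<in> carrier N" using x'N unfolding solution_def by simp
  let ?z = "\<lambda>j. x j \<ominus> x' j"
  have zB: "\<forall>i<m. lincomb (r i) ?z n \<in> B"
    using lincomb_correction_mem[OF B' r abN x_ab x'N] by blast
  have z: "solution (carrier N) (=) m n r (\<lambda>i. lincomb (r i) ?z n) ?z"
    using x x'_carrier unfolding solution_def by simp
  obtain y where y: "solution B (=) m n r (\<lambda>i. lincomb (r i) ?z n) y"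
    using pure_submodD[OF B r zB z] by blast
  have "solution (carrier N) (=) m n r c (\<lambda>j. x' j \<oplus> y j)"
    using solution_add_difference[OF r x x'_carrier solution_mono[OF y BN]] .
  moreover have "x' j \<oplus> y j \<in> sum_set A B" if "j < n" for j
  proof -
    have "x' j \<in> A" "y j \<in> B" using x' y that unfolding solution_def by simp_all
    then show ?thesis unfolding sum_set_def by blast
  qed
  ultimately have "solution (sum_set A B) (=) m n r c (\<lambda>j. x' j \<oplus> y j)"
    unfolding solution_def by simp
  then show "\<exists>y. solution (sum_set A B) (=) m n r c y" by blast
qed

definition sum_fibre :: "'a set \<Rightarrow> 'a set \<Rightarrow> 'a \<Rightarrow> ('a \<times> 'a) set" where
  "sum_fibre A B z = {(a, b). a \<in> A \<and> b \<in> B \<and> a \<oplus> b = z}"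

lemma pushout_rel_Int:
  assumes A: "submodule_of R A N" and B: "submodule_of R B N" and C: "carrier C = carrier A \<inter> carrier B"
  shows "pushout_rel C A B = {((a, b), (a', b')). a \<in> carrier A \<and> b \<in> carrier B \<and>
           a' \<in> carrier A \<and> b' \<in> carrier B \<and> a \<oplus> b = a' \<oplus> b'}"
proof -
  interpret A: abelian_group A by (rule submodule_of_abelian_group[OF A])
  interpret B: abelian_group B by (rule submodule_of_abelian_group[OF B])
  have AN: "carrier A \<subseteq> carrier N" and BN: "carrier B \<subseteq> carrier N"
    using A B by (simp_all add: submodule_of_def)
  have "(\<exists>m\<in>carrier C. a \<ominus>\<^bsub>A\<^esub> a' = m \<and> b \<ominus>\<^bsub>B\<^esub> b' = \<ominus>\<^bsub>B\<^esub> m) \<longleftrightarrow> a \<oplus> b = a' \<oplus> b'"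
    if a: "a \<in> carrier A" "a' \<in> carrier A" and b: "b \<in> carrier B" "b' \<in> carrier B" for a a' b b'
  proof -
    have N: "a \<in> carrier N" "a' \<in> carrier N" "b \<in> carrier N" "b' \<in> carrier N" using a b AN BN by auto
    have minus_A: "a \<ominus>\<^bsub>A\<^esub> a' = a \<ominus> a'" and minus_B: "b \<ominus>\<^bsub>B\<^esub> b' = b \<ominus> b'"
      using submodule_of_minus[OF A a] submodule_of_minus[OF B b] .
    have diff_A: "a \<ominus> a' \<in> carrier A" using A.minus_closed[OF a] minus_A by simp
    have diff_B: "b' \<ominus> b \<in> carrier B"
      using B.minus_closed[OF b(2,1)] submodule_of_minus[OF B b(2,1)] by simp
    have "(\<exists>m\<in>carrier C. a \<ominus>\<^bsub>A\<^esub> a' = m \<and> b \<ominus>\<^bsub>B\<^esub> b' = \<ominus>\<^bsub>B\<^esub> m) \<longleftrightarrow>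
        a \<ominus> a' \<in> carrier B \<and> b \<ominus> b' = \<ominus> (a \<ominus> a')"
      using C diff_A minus_A minus_B submodule_of_a_inv[OF B] by auto
    also have "\<dots> \<longleftrightarrow> b \<ominus> b' = \<ominus> (a \<ominus> a')"
    proof
      assume eq: "b \<ominus> b' = \<ominus> (a \<ominus> a')"
      have "a \<ominus> a' = \<ominus> (b \<ominus> b')" using eq N by (simp add: minus_minus)
      also have "\<dots> = b' \<ominus> b" using N by (simp add: inv_minus)
      finally show "a \<ominus> a' \<in> carrier B \<and> b \<ominus> b' = \<ominus> (a \<ominus> a')" using diff_B eq by simp
    qed simp
    also have "\<dots> \<longleftrightarrow> a \<oplus> b = a' \<oplus> b'" using add_eq_add_iff N by simp
    finally show ?thesis .
  qed
  then show ?thesis unfolding pushout_rel_def by auto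
qed

lemma pushout_carrier_Int:
  assumes "submodule_of R A N" "submodule_of R B N" "carrier C = carrier A \<inter> carrier B"
  shows "pushout_carrier C A B = sum_fibre (carrier A) (carrier B) ` sum_set (carrier A) (carrier B)"
proof -
  have "pushout_rel C A B `` {(a, b)} = sum_fibre (carrier A) (carrier B) (a \<oplus> b)"
    if "a \<in> carrier A" "b \<in> carrier B" for a b
    using that unfolding pushout_rel_Int[OF assms] sum_fibre_def by auto
  then show ?thesis
    unfolding pushout_carrier_def quotient_def sum_set_def by auto
qed

lemma pushout_map_sum_fibre:
  assumes "z \<in> sum_set A B"
  shows "pushout_map N (sum_fibre A B z) = z"
proof -
  have "(\<lambda>(a, b). a \<oplus> b) ` sum_fibre A B z = {z}"
    using assms unfolding sum_fibre_def sum_set_def by auto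
  then show ?thesis unfolding pushout_map_def by simp
qed

text \<open>Over the intersection the pushout map is always injective, so independence is purity of the sum.\<close>

lemma indep_iff_pure_sum_set:
  assumes "submodule_of R A N" "submodule_of R B N" "carrier C = carrier A \<inter> carrier B"
  shows "indep R C A B N \<longleftrightarrow> pure_submod R N (sum_set (carrier A) (carrier B))"
proof -
  let ?T = "sum_set (carrier A) (carrier B)" and ?F = "sum_fibre (carrier A) (carrier B)"
  have "inj_on (pushout_map N) (?F ` ?T)"
    by (rule inj_onI) (auto simp: pushout_map_sum_fibre)
  moreover have "pushout_map N ` ?F ` ?T = ?T"
    by (simp add: image_image pushout_map_sum_fibre)
  ultimately show ?thesis unfolding indep_def pushout_carrier_Int[OF assms] by simp
qed

end

subsection \<open>Closing a set under witnesses of solvable systems\<close>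

definition matrix_of_list :: "nat \<Rightarrow> 'r list \<Rightarrow> nat \<Rightarrow> nat \<Rightarrow> 'r" where
  "matrix_of_list n rs i j = rs ! (i * n + j)"

lemma matrix_of_list_row_major:
  fixes m n :: nat
  assumes "i < m" "j < n"
  shows "matrix_of_list n (map (\<lambda>k. r (k div n) (k mod n)) [0..<m * n]) i j = r i j"
proof -
  have "i * n + j < Suc i * n" using assms by simp
  also have "\<dots> \<le> m * n" using assms by (intro mult_le_mono1) simp
  finally show ?thesis unfolding matrix_of_list_def using assms by simp
qed

text \<open>A kind \<open>(P, rel)\<close> of system asks for solutions in \<open>P\<close> of equations read with \<open>rel\<close>.\<close>

locale witnessed_systems = left_mod R N
    for R :: "('r, 'm) ring_scheme" and N :: "('r, 'a) module" (structure) +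
  fixes kinds :: "('a set \<times> ('a \<Rightarrow> 'a \<Rightarrow> bool)) set"
  assumes finite_kinds: "finite kinds" and kinds_carrier: "(P, rel) \<in> kinds \<Longrightarrow> P \<subseteq> carrier N"
begin

definition witnesses ::
  "'a set \<Rightarrow> ('a \<Rightarrow> 'a \<Rightarrow> bool) \<Rightarrow> nat \<Rightarrow> nat \<Rightarrow> (nat \<Rightarrow> nat \<Rightarrow> 'r) \<Rightarrow> (nat \<Rightarrow> 'a) \<Rightarrow> 'a set"
  where "witnesses P rel m n r c =
    (if \<exists>x. solution P rel m n r c x then (SOME x. solution P rel m n r c x) ` {..<n} else {})"

text \<open>Systems are enumerated by lists of coefficients and right-hand sides, so that one step adds
  at most \<open>|S| + |R| + \<aleph>\<^sub>0\<close> elements.\<close>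

definition witness_set :: "'a set \<Rightarrow> 'a set" where
  "witness_set S = (\<Union>(P, rel)\<in>kinds. \<Union>m. \<Union>n. \<Union>rs\<in>lists (carrier R). \<Union>cs\<in>lists S.
     witnesses P rel m n (matrix_of_list n rs) ((!) cs))"

definition skolem_step :: "'a set \<Rightarrow> 'a set" where
  "skolem_step S = S \<union> (\<lambda>(x, y). x \<oplus> y) ` (S \<times> S) \<union> a_inv N ` S \<union> (\<lambda>(a, x). a \<odot> x) ` (carrier R \<times> S) \<union>
     witness_set S"

definition skolem_hull :: "'a set \<Rightarrow> 'a set" where
  "skolem_hull A = (\<Union>k. (skolem_step ^^ k) A)"

lemma witnesses_subset: "witnesses P rel m n r c \<subseteq> P"
proof (cases "\<exists>x. solution P rel m n r c x")
  case True
  then have "solution P rel m n r c (SOME x. solution P rel m n r c x)" by (rule someI_ex)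
  then show ?thesis using True unfolding witnesses_def solution_def by auto
qed (simp add: witnesses_def)

lemma witnesses_subset_witness_set:
  "(P, rel) \<in> kinds \<Longrightarrow> rs \<in> lists (carrier R) \<Longrightarrow> cs \<in> lists S \<Longrightarrow>
   witnesses P rel m n (matrix_of_list n rs) ((!) cs) \<subseteq> witness_set S"
  unfolding witness_set_def by blast

lemma witness_set_carrier: "witness_set S \<subseteq> carrier N"
  unfolding witness_set_def using witnesses_subset kinds_carrier by blast

lemma witness_set_mono:
  assumes "S \<subseteq> T"
  shows "witness_set S \<subseteq> witness_set T"
proof
  fix z assume "z \<in> witness_set S"
  then obtain P rel m n rs cs where req: "(P, rel) \<in> kinds" and "\<forall>x\<in>set rs. x \<in> carrier R"
    and "\<forall>x\<in>set cs. x \<in> S" and z: "z \<in> witnesses P rel m n (matrix_of_list n rs) ((!) cs)"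
    unfolding witness_set_def by auto
  then have "rs \<in> lists (carrier R)" "cs \<in> lists T" using assms by auto
  then show "z \<in> witness_set T" using witnesses_subset_witness_set[OF req] z by blast
qed

lemma witness_set_subset_skolem_step: "witness_set S \<subseteq> skolem_step S"
  unfolding skolem_step_def by (rule Un_upper2)

lemma skolem_step_carrier: "S \<subseteq> carrier N \<Longrightarrow> skolem_step S \<subseteq> carrier N"
  unfolding skolem_step_def using witness_set_carrier by auto

lemma skolem_step_mono: "S \<subseteq> T \<Longrightarrow> skolem_step S \<subseteq> skolem_step T"
  unfolding skolem_step_def using witness_set_mono by blast

lemma subset_skolem_step: "S \<subseteq> skolem_step S"
  unfolding skolem_step_def by blast

lemma skolem_step_iterate_mono: "k \<le> k' \<Longrightarrow> (skolem_step ^^ k) A \<subseteq> (skolem_step ^^ k') A"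
  by (rule lift_Suc_mono_le[of "\<lambda>k. (skolem_step ^^ k) A"]) (simp_all add: subset_skolem_step)

lemma skolem_hull_carrier: "A \<subseteq> carrier N \<Longrightarrow> skolem_hull A \<subseteq> carrier N"
proof -
  assume "A \<subseteq> carrier N"
  then have "(skolem_step ^^ k) A \<subseteq> carrier N" for k
    by (induction k) (simp_all add: skolem_step_carrier)
  then show ?thesis unfolding skolem_hull_def by blast
qed

lemma subset_skolem_hull: "A \<subseteq> skolem_hull A"
  unfolding skolem_hull_def by (metis UN_upper UNIV_I funpow_0)

lemma skolem_step_finite_subset:
  assumes "finite F" "F \<subseteq> skolem_hull A"
  shows "skolem_step F \<subseteq> skolem_hull A"
proof -
  have "\<exists>k. F \<subseteq> (skolem_step ^^ k) A"
    using assms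
  proof (induction F rule: finite_induct)
    case (insert x F)
    obtain k where "F \<subseteq> (skolem_step ^^ k) A" using insert by blast
    moreover obtain k' where "x \<in> (skolem_step ^^ k') A" using insert.prems unfolding skolem_hull_def by blast
    ultimately have "insert x F \<subseteq> (skolem_step ^^ max k k') A"
      using skolem_step_iterate_mono[of k "max k k'" A] skolem_step_iterate_mono[of k' "max k k'" A] by auto
    then show ?case by blast
  qed simp
  then obtain k where "F \<subseteq> (skolem_step ^^ k) A" by blast
  then have "skolem_step F \<subseteq> (skolem_step ^^ Suc k) A" by (simp add: skolem_step_mono)
  then show ?thesis unfolding skolem_hull_def by blast
qed

lemma skolem_hull_submod:
  assumes "A \<subseteq> carrier N" "\<zero> \<in> A"
  shows "submod R N (skolem_hull A)"
proof -
  have "x \<oplus> y \<in> skolem_hull A" if "x \<in> skolem_hull A" "y \<in> skolem_hull A" for x y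
  proof -
    have "x \<oplus> y \<in> skolem_step {x, y}" unfolding skolem_step_def by blast
    then show ?thesis using skolem_step_finite_subset[of "{x, y}"] that by blast
  qed
  moreover have "\<ominus> x \<in> skolem_hull A" if "x \<in> skolem_hull A" for x
  proof -
    have "\<ominus> x \<in> skolem_step {x}" unfolding skolem_step_def by blast
    then show ?thesis using skolem_step_finite_subset[of "{x}"] that by blast
  qed
  moreover have "a \<odot> x \<in> skolem_hull A" if "a \<in> carrier R" "x \<in> skolem_hull A" for a x
  proof -
    have "a \<odot> x \<in> skolem_step {x}" unfolding skolem_step_def using that(1) by blast
    then show ?thesis using skolem_step_finite_subset[of "{x}"] that by blast
  qed
  ultimately show ?thesis
    using skolem_hull_carrier[OF assms(1)] subset_skolem_hull[of A] assms(2) by (simp add: submod_def subset_eq)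
qed

lemma skolem_hull_solution:
  assumes req: "(P, rel) \<in> kinds" and r: "\<forall>i<m. \<forall>j<n. r i j \<in> carrier R"
    and c: "\<forall>i<m. c i \<in> skolem_hull A" and x: "solution P rel m n r c x"
  shows "\<exists>y. solution (P \<inter> skolem_hull A) rel m n r c y"
proof -
  define rs where "rs = map (\<lambda>k. r (k div n) (k mod n)) [0..<m * n]"
  define cs where "cs = map c [0..<m]"
  have rs: "rs \<in> lists (carrier R)"
  proof -
    have "r (k div n) (k mod n) \<in> carrier R" if "k < m * n" for k
      using that r by (cases "n = 0") (auto simp: div_less_iff_less_mult)
    then show ?thesis unfolding rs_def by auto
  qed
  have cs: "cs \<in> lists (c ` {..<m})" unfolding cs_def by auto
  have "witnesses P rel m n (matrix_of_list n rs) ((!) cs) \<subseteq> witness_set (c ` {..<m})"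
    by (rule witnesses_subset_witness_set[OF req rs cs])
  also have "\<dots> \<subseteq> skolem_step (c ` {..<m})" by (rule witness_set_subset_skolem_step)
  also have "\<dots> \<subseteq> skolem_hull A" using skolem_step_finite_subset c by auto
  finally have W: "witnesses P rel m n (matrix_of_list n rs) ((!) cs) \<subseteq> skolem_hull A" .
  have same: "solution P rel m n (matrix_of_list n rs) ((!) cs) z \<longleftrightarrow> solution P rel m n r c z"
    for z using kinds_carrier[OF req] r unfolding rs_def cs_def
    by (intro solution_cong) (simp_all add: matrix_of_list_row_major)
  have ex: "\<exists>z. solution P rel m n (matrix_of_list n rs) ((!) cs) z" using x same by blast
  define y where "y = (SOME z. solution P rel m n (matrix_of_list n rs) ((!) cs) z)"
  have "solution P rel m n r c y" using someI_ex[OF ex] same unfolding y_def by blast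
  moreover have "y ` {..<n} \<subseteq> skolem_hull A" using W ex unfolding witnesses_def y_def by simp
  ultimately show ?thesis unfolding solution_def by blast
qed

lemma card_of_witness_set:
  assumes B: "infinite B" and RB: "|carrier R| \<le>o |B|" and SB: "|S| \<le>o |B|"
  shows "|witness_set S| \<le>o |B|"
proof -
  have "|witnesses P rel m n r c| \<le>o |B|" for P rel m n r c
    by (rule finite_card_of_ordLeq_infinite[OF _ B]) (simp add: witnesses_def)
  moreover have "|UNIV :: nat set| \<le>o |B|" using B infinite_iff_card_of_nat by blast
  ultimately show ?thesis
    unfolding witness_set_def
    using finite_card_of_ordLeq_infinite[OF finite_kinds B]
      card_of_lists_ordLeq_infinite[OF B RB] card_of_lists_ordLeq_infinite[OF B SB]
    by (auto intro!: card_of_UNION_ordLeq_infinite[OF B])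
qed

lemma card_of_skolem_step:
  assumes B: "infinite B" and RB: "|carrier R| \<le>o |B|" and SB: "|S| \<le>o |B|"
  shows "|skolem_step S| \<le>o |B|"
proof -
  have Un: "|X \<union> Y| \<le>o |B|" if "|X| \<le>o |B|" "|Y| \<le>o |B|" for X Y :: "'a set"
    using card_of_Un_ordLeq_infinite_Field[OF _ that card_of_Card_order] B by (simp add: Field_card_of)
  have image_Times: "|f ` (X \<times> S)| \<le>o |B|" if "|X| \<le>o |B|" for f :: "_ \<Rightarrow> 'a" and X
    using card_of_image[of f "X \<times> S"] card_of_Sigma_ordLeq_infinite[OF B that, of "\<lambda>_. S"] SB
      ordLeq_transitive by blast
  have "|a_inv N ` S| \<le>o |B|" using card_of_image ordLeq_transitive SB by blast
  then show ?thesis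
    unfolding skolem_step_def
    using SB image_Times[OF SB] image_Times[OF RB] card_of_witness_set[OF assms] Un by presburger
qed

lemma card_of_skolem_hull:
  assumes B: "infinite B" and RB: "|carrier R| \<le>o |B|" and AB: "|A| \<le>o |B|"
  shows "|skolem_hull A| \<le>o |B|"
proof -
  have "|(skolem_step ^^ k) A| \<le>o |B|" for k
    by (induction k) (simp_all add: AB card_of_skolem_step[OF B RB])
  then show ?thesis
    unfolding skolem_hull_def using B infinite_iff_card_of_nat
    by (intro card_of_UNION_ordLeq_infinite[OF B]) auto
qed

end

locale pure_pair = left_mod R N
    for R :: "('r, 'm) ring_scheme" and N :: "('r, 'a) module" (structure) +
  fixes M1 M2 :: "('r, 'a) module"
  assumes pure_le_M1: "pure_le R M1 N" and pure_le_M2: "pure_le R M2 N"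
begin

lemma M1_pure: "pure_submod R N (carrier M1)" and M2_pure: "pure_submod R N (carrier M2)"
  using pure_le_M1 pure_le_M2 by (simp_all add: pure_le_iff_submodule_of)

lemma M1_submod: "submod R N (carrier M1)" and M2_submod: "submod R N (carrier M2)"
  using M1_pure M2_pure by (simp_all add: pure_submod_def)

lemma M1_submodule_of: "submodule_of R M1 N" and M2_submodule_of: "submodule_of R M2 N"
  using pure_le_M1 pure_le_M2 by (simp_all add: pure_le_iff_submodule_of)

lemma M2_carrier: "carrier M2 \<subseteq> carrier N"
  using M2_submod by (simp add: submod_def)

definition amalgam_kinds :: "('a set \<times> ('a \<Rightarrow> 'a \<Rightarrow> bool)) set" where
  "amalgam_kinds = {(carrier N, (=)), (carrier N, \<lambda>u v. u \<ominus> v \<in> carrier M2), (carrier M2, (=))}"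

sublocale witnessed_systems R N amalgam_kinds
  using M2_carrier by unfold_locales (auto simp: amalgam_kinds_def)

definition M1' :: "('r, 'a) module" where
  "M1' = N\<lparr>carrier := skolem_hull (carrier M1)\<rparr>"

definition M0 :: "('r, 'a) module" where
  "M0 = N\<lparr>carrier := skolem_hull (carrier M1) \<inter> carrier M2\<rparr>"

lemma skolem_hull_M1_submod: "submod R N (skolem_hull (carrier M1))"
  using M1_submod by (intro skolem_hull_submod) (simp_all add: submod_def)

lemma skolem_hull_M1_carrier: "skolem_hull (carrier M1) \<subseteq> carrier N"
  using M1_submod by (intro skolem_hull_carrier) (simp add: submod_def)

lemma submodule_of_M1': "submodule_of R M1' N"
  unfolding M1'_def by (rule submodule_of_restrict[OF skolem_hull_M1_submod])

lemma submodule_of_M0: "submodule_of R M0 N"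
  unfolding M0_def by (rule submodule_of_restrict[OF submod_Int[OF skolem_hull_M1_submod M2_submod]])

lemma pure_le_M1'_N: "pure_le R M1' N"
proof -
  have "pure_submod R N (skolem_hull (carrier M1))"
  proof (rule pure_submodI[OF skolem_hull_M1_submod])
    fix m n r c x
    assume "\<forall>i<m. \<forall>j<n. r i j \<in> carrier R" "\<forall>i<m. c i \<in> skolem_hull (carrier M1)"
      and "solution (carrier N) (=) m n r c x"
    then show "\<exists>y. solution (skolem_hull (carrier M1)) (=) m n r c y"
      using skolem_hull_solution[of "carrier N" "(=)" _ _ _ _ "carrier M1"] skolem_hull_M1_carrier
      by (simp add: amalgam_kinds_def Int_absorb1)
  qed
  then show ?thesis using submodule_of_M1' by (simp add: pure_le_iff_submodule_of M1'_def)
qed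

lemma pure_le_M1_M1': "pure_le R M1 M1'"
proof (rule pure_leI[OF _ submodule_of_M1'])
  show "submodule_of R M1 N" by (rule M1_submodule_of)
  show "carrier M1 \<subseteq> carrier M1'" by (simp add: M1'_def subset_skolem_hull)
  fix m n r c x
  assume r: "\<forall>i<m. \<forall>j<n. r i j \<in> carrier R" and c: "\<forall>i<m. c i \<in> carrier M1"
    and "solution (carrier M1') (=) m n r c x"
  then have "solution (carrier N) (=) m n r c x"
    using solution_mono[OF _ skolem_hull_M1_carrier] by (simp add: M1'_def)
  then show "\<exists>y. solution (carrier M1) (=) m n r c y" using pure_submodD[OF M1_pure r c] by blast
qed

lemma pure_le_M0_M2: "pure_le R M0 M2"
proof (rule pure_leI[OF submodule_of_M0])
  show "submodule_of R M2 N" by (rule M2_submodule_of)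
  show "carrier M0 \<subseteq> carrier M2" by (simp add: M0_def)
  fix m n r c x
  assume "\<forall>i<m. \<forall>j<n. r i j \<in> carrier R" "\<forall>i<m. c i \<in> carrier M0"
    and "solution (carrier M2) (=) m n r c x"
  then show "\<exists>y. solution (carrier M0) (=) m n r c y"
    using skolem_hull_solution[of "carrier M2" "(=)" _ _ _ _ "carrier M1"]
    by (simp add: amalgam_kinds_def M0_def Int_commute)
qed

lemma pure_le_M0_M1': "pure_le R M0 M1'"
proof (rule pure_leI[OF submodule_of_M0 submodule_of_M1'])
  show "carrier M0 \<subseteq> carrier M1'" by (simp add: M0_def M1'_def)
  fix m n r c x
  assume r: "\<forall>i<m. \<forall>j<n. r i j \<in> carrier R" and c: "\<forall>i<m. c i \<in> carrier M0"
    and "solution (carrier M1') (=) m n r c x"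
  then have "solution (carrier N) (=) m n r c x"
    using solution_mono[OF _ skolem_hull_M1_carrier] by (simp add: M1'_def)
  moreover have "\<forall>i<m. c i \<in> carrier M2" using c by (simp add: M0_def)
  ultimately obtain y where "solution (carrier M2) (=) m n r c y"
    using pure_submodD[OF M2_pure r] by blast
  then show "\<exists>y. solution (carrier M0) (=) m n r c y"
    using skolem_hull_solution[of "carrier M2" "(=)" _ _ _ _ "carrier M1"] r c
    by (simp add: amalgam_kinds_def M0_def Int_commute)
qed

lemma card_of_M0: "|carrier M0| \<le>o |carrier M1 <+> carrier R <+> (UNIV :: nat set)|"
proof -
  let ?B = "carrier M1 <+> carrier R <+> (UNIV :: nat set)"
  have RB: "|carrier R| \<le>o |?B|"
    using card_of_Plus1[of "carrier R" "UNIV :: nat set"] card_of_Plus2[of "carrier R <+> UNIV" "carrier M1"]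
    by (rule ordLeq_transitive)
  have "|skolem_hull (carrier M1)| \<le>o |?B|"
    by (rule card_of_skolem_hull[OF _ RB card_of_Plus1]) simp
  moreover have "|carrier M0| \<le>o |skolem_hull (carrier M1)|" by (simp add: M0_def card_of_mono1)
  ultimately show ?thesis using ordLeq_transitive by blast
qed

lemma indep_M0_M1'_M2: "indep R M0 M1' M2 N"
proof -
  have "pure_submod R N (sum_set (skolem_hull (carrier M1)) (carrier M2))"
  proof (rule pure_submod_sum_set[OF skolem_hull_M1_submod M2_pure])
    fix m n r c x
    assume "\<forall>i<m. \<forall>j<n. r i j \<in> carrier R" "\<forall>i<m. c i \<in> skolem_hull (carrier M1)"
      and "solution (carrier N) (\<lambda>u v. u \<ominus> v \<in> carrier M2) m n r c x"
    then show "\<exists>y. solution (skolem_hull (carrier M1)) (\<lambda>u v. u \<ominus> v \<in> carrier M2) m n r c y"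
      using skolem_hull_solution[of "carrier N" "\<lambda>u v. u \<ominus> v \<in> carrier M2" _ _ _ _ "carrier M1"] skolem_hull_M1_carrier
      by (simp add: amalgam_kinds_def Int_absorb1)
  qed
  then show ?thesis
    using indep_iff_pure_sum_set[OF submodule_of_M1' M2_submodule_of] by (simp add: M0_def M1'_def)
qed

end

theorem theorem4p9:
  fixes R :: "('r, 'm) ring_scheme" and K :: "('r, 'a) module \<Rightarrow> bool"
    and M1 M2 N :: "('r, 'a) module"
  assumes "ring R"
    and "AEC_pure R K"
    and dsum: "\<And>(I::'a set) M D. (\<forall>i\<in>I. K (M i)) \<Longrightarrow> is_direct_sum R I M D \<Longrightarrow> K D"
    and pure_sub: "\<And>M N. K N \<Longrightarrow> pure_le R M N \<Longrightarrow> K M"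
    and pure_epi: "\<And>M (M'::('r, 'a) module) f. K M \<Longrightarrow> pure_epi R M M' f \<Longrightarrow> K M'"
    and "K M1" "K M2" "K N"
    and "pure_le R M1 N" "pure_le R M2 N"
  shows "\<exists>M1' M0. K M1' \<and> K M0 \<and> pure_le R M0 M1' \<and> pure_le R M1' N \<and>
           pure_le R M0 M2 \<and> pure_le R M1 M1' \<and>
           (card_of (carrier M0), card_of (carrier M1 <+> carrier R <+> (UNIV::nat set))) \<in> ordLeq \<and>
           indep R M0 M1' M2 N"
proof -
  interpret pure_pair R N M1 M2
    using \<open>pure_le R M1 N\<close> \<open>pure_le R M2 N\<close>
    by unfold_locales (simp_all add: pure_le_def)
  have "K M1'" by (rule pure_sub[OF \<open>K N\<close> pure_le_M1'_N])
  moreover have "K M0" by (rule pure_sub[OF \<open>K M2\<close> pure_le_M0_M2])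
  ultimately show ?thesis
    using pure_le_M0_M1' pure_le_M1'_N pure_le_M0_M2 pure_le_M1_M1' card_of_M0 indep_M0_M1'_M2
    by (intro exI[of _ M1'] exI[of _ M0]) simp
qed

end
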